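(* Let $(M,f,g)$ be an $(m,n)$-hypermodule over a commutative Krasner $(m,n)$-hyperring $(R,f',g')$ with scalar identity $1$, and let $Q$ be an $n$-ary weakly classical prime subhypermodule of $M$. Then for all $r_1,\dots,r_{n-1}\in R$ and $a\in M$, $$Q_{g(r_1^{n-1},a)}\subseteq F_{g(r_1^{n-1},a)}\cup Q_{g(r_1,1^{(n-2)},a)}\cup\cdots\cup Q_{g(r_{n-1},1^{(n-2)},a)}.$$
   Context: A commutative Krasner $(m,n)$-hyperring with scalar identity $1$ is a triple $(R,f',g')$ where $(R,f')$ is a canonical $m$-ary hypergroup with zero $0$, $(R,g')$ is a commutative $n$-ary semigroup, $g'$ is distributive over $f'$, $0$ is a zero element for $g'$, and $g'(x,1^{(n-1)})=x$. Notation: $x_i^j$ denotes $x_i,\dots,x_j$ and $x^{(k)}$ denotes $x$ repeated $k$ times. An $(m,n)$-hypermodule over $R$ is a triple $(M,f,g)$ with $(M,f)$ a canonical $m$-ary hypergroup with zero $0$ and $g:R^{n-1}\times M\to P^*(M)$ satisfying: $g(r_1^{n-1},f(x_1^m))=f(g(r_1^{n-1},x_1),\dots,g(r_1^{n-1},x_m))$; $g(r_1^{i-1},f'(s_1^m),r_{i+1}^{n-1},x)=f(g(r_1^{i-1},s_1,r_{i+1}^{n-1},x),\dots,g(r_1^{i-1},s_m,r_{i+1}^{n-1},x))$; $g(r_1^{i-1},g'(r_i^{i+n-1}),r_{i+n}^{2n-2},x)=g(r_1^{n-1},g(r_n^{2n-2},x))$; $g(r_1^{i-1},0,r_{i+1}^{n-1},x)=\{0\}$;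 moreover $g(1^{(n-1)},a)=\{a\}$. For subsets, $g(A_1,\dots,A_{n-1},X)$ is the union of $g(r_1^{n-1},x)$ over $r_i\in A_i$, $x\in X$. A subhypermodule is a nonempty $N\subseteq M$ with $(N,f)$ an $m$-ary subhypergroup and $g(R^{(n-1)},N)\subseteq N$. A proper subhypermodule $Q$ is $n$-ary weakly classical prime if for $r_1^{n-1}\in R$, $a\in M$, $0\notin g(r_1^{n-1},a)\subseteq Q$ implies $g(r_i,1^{(n-2)},a)\subseteq Q$ for some $1\le i\le n-1$. For a nonempty $X\subseteq M$ and a subhypermodule $Q$: $Q_X=\{r\in R: g(r,1^{(n-2)},X)\subseteq Q\}$ and $F_X=\{r\in R: r\neq0,\ 0\in g(r,1^{(n-2)},X)\}$. *)

theory Defs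
  imports Main "HOL-Library.Multiset"
begin

text \<open>Conventions: the carriers R and M are the whole types 'r and 'm.
  An m-ary hyperoperation is a map from lists (of length m) to sets; an
  argument tuple x_1^k is a list of length k (0-based positions).\<close>

definition sg :: "'a list \<Rightarrow> 'a set list" where
  "sg xs = map (\<lambda>x. {x}) xs"

definition lift :: "('a list \<Rightarrow> 'a set) \<Rightarrow> 'a set list \<Rightarrow> 'a set" where
  "lift F As = \<Union> {F xs | xs. list_all2 (\<in>) xs As}"

definition hassoc :: "nat \<Rightarrow> ('a list \<Rightarrow> 'a set) \<Rightarrow> bool" where
  "hassoc m f \<longleftrightarrow> (\<forall>xs i j. length xs = 2*m - 1 \<and> i < m \<and> j < m \<longrightarrow>
     lift f (sg (take i xs) @ [f (take m (drop i xs))] @ sg (drop (i+m) xs)) =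
     lift f (sg (take j xs) @ [f (take m (drop j xs))] @ sg (drop (j+m) xs)))"

definition hcomm :: "nat \<Rightarrow> ('a list \<Rightarrow> 'b) \<Rightarrow> bool" where
  "hcomm m f \<longleftrightarrow> (\<forall>xs ys. length xs = m \<and> mset ys = mset xs \<longrightarrow> f xs = f ys)"

definition hreproductive :: "nat \<Rightarrow> ('a list \<Rightarrow> 'a set) \<Rightarrow> 'a set \<Rightarrow> bool" where
  "hreproductive m f H \<longleftrightarrow> (\<forall>as i. length as = m - 1 \<and> set as \<subseteq> H \<and> i < m \<longrightarrow>
     lift f (sg (take i as) @ [H] @ sg (drop i as)) = H)"

definition hinv :: "nat \<Rightarrow> ('a list \<Rightarrow> 'a set) \<Rightarrow> 'a \<Rightarrow> 'a \<Rightarrow> 'a" where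
  "hinv m f z x = (THE y. z \<in> f (x # y # replicate (m-2) z))"

definition canonical_mhypergroup :: "nat \<Rightarrow> ('a list \<Rightarrow> 'a set) \<Rightarrow> 'a \<Rightarrow> bool" where
  "canonical_mhypergroup m f z \<longleftrightarrow>
     2 \<le> m \<and>
     (\<forall>xs. length xs = m \<longrightarrow> f xs \<noteq> {}) \<and>
     hassoc m f \<and> hreproductive m f UNIV \<and> hcomm m f \<and>
     (\<forall>x. f (x # replicate (m-1) z) = {x}) \<and>
     (\<forall>e. (\<forall>x. f (x # replicate (m-1) e) = {x}) \<longrightarrow> e = z) \<and>
     (\<forall>x. \<exists>!y. z \<in> f (x # y # replicate (m-2) z)) \<and>
     (\<forall>xs x i. length xs = m \<and> i < m \<and> x \<in> f xs \<longrightarrow>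
        xs ! i \<in> f (x # map (hinv m f z) (take i xs @ drop (Suc i) xs)))"

definition nsemigroup :: "nat \<Rightarrow> ('a list \<Rightarrow> 'a) \<Rightarrow> bool" where
  "nsemigroup n g \<longleftrightarrow> 2 \<le> n \<and> (\<forall>xs i j. length xs = 2*n - 1 \<and> i < n \<and> j < n \<longrightarrow>
     g (take i xs @ [g (take n (drop i xs))] @ drop (i+n) xs) =
     g (take j xs @ [g (take n (drop j xs))] @ drop (j+n) xs))"

definition krasner_hyperring ::
  "nat \<Rightarrow> nat \<Rightarrow> ('r list \<Rightarrow> 'r set) \<Rightarrow> ('r list \<Rightarrow> 'r) \<Rightarrow> 'r \<Rightarrow> 'r \<Rightarrow> bool" where
  "krasner_hyperring m n addR mulR z one \<longleftrightarrow>
     canonical_mhypergroup m addR z \<and> nsemigroup n mulR \<and> hcomm n mulR \<and>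
     (\<forall>xs ys i. length xs = n - 1 \<and> length ys = m \<and> i < n \<longrightarrow>
        {mulR (take i xs @ [y] @ drop i xs) | y. y \<in> addR ys} =
        addR (map (\<lambda>y. mulR (take i xs @ [y] @ drop i xs)) ys)) \<and>
     (\<forall>xs i. length xs = n - 1 \<and> i < n \<longrightarrow> mulR (take i xs @ [z] @ drop i xs) = z) \<and>
     (\<forall>x. mulR (x # replicate (n-1) one) = x)"

definition hypermodule ::
  "nat \<Rightarrow> nat \<Rightarrow> ('r list \<Rightarrow> 'r set) \<Rightarrow> ('r list \<Rightarrow> 'r) \<Rightarrow> 'r \<Rightarrow> 'r \<Rightarrow>
   ('m list \<Rightarrow> 'm set) \<Rightarrow> ('r list \<Rightarrow> 'm \<Rightarrow> 'm set) \<Rightarrow> 'm \<Rightarrow> bool" where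
  "hypermodule m n addR mulR zR one f g zM \<longleftrightarrow>
     canonical_mhypergroup m f zM \<and>
     (\<forall>rs x. length rs = n - 1 \<longrightarrow> g rs x \<noteq> {}) \<and>
     (\<forall>rs xs. length rs = n - 1 \<and> length xs = m \<longrightarrow>
        (\<Union>x\<in>f xs. g rs x) = lift f (map (g rs) xs)) \<and>
     (\<forall>rs ss i x. length rs = n - 2 \<and> length ss = m \<and> i < n - 1 \<longrightarrow>
        (\<Union>s\<in>addR ss. g (take i rs @ [s] @ drop i rs) x) =
        lift f (map (\<lambda>s. g (take i rs @ [s] @ drop i rs) x) ss)) \<and>
     (\<forall>rs i x. length rs = 2*n - 2 \<and> i < n - 1 \<longrightarrow>
        g (take i rs @ [mulR (take n (drop i rs))] @ drop (i+n) rs) x =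
        (\<Union>y\<in>g (drop (n-1) rs) x. g (take (n-1) rs) y)) \<and>
     (\<forall>rs i x. length rs = n - 2 \<and> i < n - 1 \<longrightarrow>
        g (take i rs @ [zR] @ drop i rs) x = {zM}) \<and>
     (\<forall>a. g (replicate (n-1) one) a = {a})"

definition msubhypergroup :: "nat \<Rightarrow> ('a list \<Rightarrow> 'a set) \<Rightarrow> 'a set \<Rightarrow> bool" where
  "msubhypergroup m f N \<longleftrightarrow> N \<noteq> {} \<and>
     (\<forall>xs. length xs = m \<and> set xs \<subseteq> N \<longrightarrow> f xs \<subseteq> N) \<and> hreproductive m f N"

definition subhypermodule ::
  "nat \<Rightarrow> nat \<Rightarrow> ('m list \<Rightarrow> 'm set) \<Rightarrow> ('r list \<Rightarrow> 'm \<Rightarrow> 'm set) \<Rightarrow> 'm set \<Rightarrow> bool" where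
  "subhypermodule m n f g N \<longleftrightarrow> msubhypergroup m f N \<and>
     (\<forall>rs x. length rs = n - 1 \<and> x \<in> N \<longrightarrow> g rs x \<subseteq> N)"

definition weakly_classical_prime ::
  "nat \<Rightarrow> nat \<Rightarrow> 'r \<Rightarrow> ('m list \<Rightarrow> 'm set) \<Rightarrow> ('r list \<Rightarrow> 'm \<Rightarrow> 'm set) \<Rightarrow> 'm \<Rightarrow> 'm set \<Rightarrow> bool" where
  "weakly_classical_prime m n one f g zM Q \<longleftrightarrow>
     subhypermodule m n f g Q \<and> Q \<noteq> UNIV \<and>
     (\<forall>rs a. length rs = n - 1 \<and> zM \<notin> g rs a \<and> g rs a \<subseteq> Q \<longrightarrow>
        (\<exists>i < n - 1. g (rs ! i # replicate (n-2) one) a \<subseteq> Q))"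

definition gset :: "('r list \<Rightarrow> 'm \<Rightarrow> 'm set) \<Rightarrow> 'r list \<Rightarrow> 'm set \<Rightarrow> 'm set" where
  "gset g rs X = (\<Union>x\<in>X. g rs x)"

definition QX :: "nat \<Rightarrow> 'r \<Rightarrow> ('r list \<Rightarrow> 'm \<Rightarrow> 'm set) \<Rightarrow> 'm set \<Rightarrow> 'm set \<Rightarrow> 'r set" where
  "QX n one g Q X = {r. gset g (r # replicate (n-2) one) X \<subseteq> Q}"

definition FX :: "nat \<Rightarrow> 'r \<Rightarrow> 'r \<Rightarrow> ('r list \<Rightarrow> 'm \<Rightarrow> 'm set) \<Rightarrow> 'm \<Rightarrow> 'm set \<Rightarrow> 'r set" where
  "FX n zR one g zM X = {r. r \<noteq> zR \<and> zM \<in> gset g (r # replicate (n-2) one) X}"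

end

theory Submission
  imports Defs
begin

text \<open>Let X = g(r_1, ..., r_(n-1), a) and r \<in> Q_X. The scalar 0 lies in every Q_Y, and a
  nonzero r with 0 \<in> g(r, 1^(n-2), X) lies in F_X. Otherwise associativity of the action gives
  g(r, 1^(n-2), X) = g(s, r_2, ..., r_(n-1), a) with s = g'(r, 1^(n-2), r_1), so weak classical
  primeness applied to the scalars s, r_2, ..., r_(n-1) yields either
  g(s, 1^(n-2), a) = g(r, 1^(n-2), g(r_1, 1^(n-2), a)) \<subseteq> Q, i.e. r \<in> Q_g(r_1, 1^(n-2), a),
  or g(r_i, 1^(n-2), a) \<subseteq> Q for some i \<ge> 2, which r maps into Q because Q is a
  subhypermodule.\<close>

lemma krasner_hyperring_arity:
  "krasner_hyperring m n addR mulR zR one \<Longrightarrow> 2 \<le> n"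
  by (simp add: krasner_hyperring_def nsemigroup_def)

lemma hypermodule_scalar_assoc:
  assumes H: "hypermodule m n addR mulR zR one f g zM"
    and n2: "2 \<le> n" and ps: "length ps = n - 1" and rs: "length rs = n - 1"
  shows "g (mulR (ps @ [hd rs]) # tl rs) a = gset g ps (g rs a)"
proof -
  obtain r0 rs' where rs_split: "rs = r0 # rs'"
    using rs n2 by (cases rs) auto
  have n_minus: "n - (n - Suc 0) = Suc 0"
    using n2 by simp
  have "\<forall>rs i x. length rs = 2 * n - 2 \<and> i < n - 1 \<longrightarrow>
      g (take i rs @ [mulR (take n (drop i rs))] @ drop (i + n) rs) x =
      (\<Union>y\<in>g (drop (n - 1) rs) x. g (take (n - 1) rs) y)"
    using H by (simp add: hypermodule_def)
  from this[rule_format, of "ps @ rs" 0 a]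
  have "g (mulR (take n (ps @ rs)) # drop n (ps @ rs)) a =
      (\<Union>y\<in>g (drop (n - 1) (ps @ rs)) a. g (take (n - 1) (ps @ rs)) y)"
    using ps rs n2 by simp
  then show ?thesis
    using ps by (simp add: rs_split n_minus gset_def)
qed

lemma hypermodule_zero_scalar:
  assumes H: "hypermodule m n addR mulR zR one f g zM" and n2: "2 \<le> n"
    and rs: "length rs = n - 2"
  shows "g (zR # rs) x = {zM}"
proof -
  have "\<forall>rs i x. length rs = n - 2 \<and> i < n - 1 \<longrightarrow> g (take i rs @ [zR] @ drop i rs) x = {zM}"
    using H by (simp add: hypermodule_def)
  from this[rule_format, of rs 0 x] show ?thesis
    using rs n2 by simp
qed

lemma subhypermodule_closed:
  "subhypermodule m n f g Q \<Longrightarrow> length rs = n - 1 \<Longrightarrow> X \<subseteq> Q \<Longrightarrow> gset g rs X \<subseteq> Q"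
  unfolding subhypermodule_def gset_def by blast

lemma subhypermodule_zero_mem:
  assumes H: "hypermodule m n addR mulR zR one f g zM" and n2: "2 \<le> n"
    and Q: "subhypermodule m n f g Q"
  shows "zM \<in> Q"
proof -
  obtain x where "x \<in> Q"
    using Q by (auto simp: subhypermodule_def msubhypergroup_def)
  then have "g (zR # replicate (n - 2) one) x \<subseteq> Q"
    using Q n2 by (auto simp: subhypermodule_def)
  then show ?thesis
    using hypermodule_zero_scalar[OF H n2] by simp
qed

lemma zero_mem_QX:
  assumes "hypermodule m n addR mulR zR one f g zM" and "2 \<le> n"
    and "subhypermodule m n f g Q"
  shows "zR \<in> QX n one g Q X"
  using hypermodule_zero_scalar[OF assms(1,2)] subhypermodule_zero_mem[OF assms]
  by (simp add: QX_def gset_def)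

lemma weakly_classical_prime_scaled:
  assumes H: "hypermodule m n addR mulR zR one f g zM" and n2: "2 \<le> n"
    and W: "weakly_classical_prime m n one f g zM Q"
    and ps: "length ps = n - 1" and rs: "length rs = n - 1"
    and nonzero: "zM \<notin> gset g ps (g rs a)" and inQ: "gset g ps (g rs a) \<subseteq> Q"
  obtains i where "i < n - 1" and "gset g ps (g (rs ! i # replicate (n - 2) one) a) \<subseteq> Q"
proof -
  define s where "s = mulR (ps @ [hd rs])"
  have absorbed: "g (s # tl rs) a = gset g ps (g rs a)"
    unfolding s_def using hypermodule_scalar_assoc[OF H n2 ps rs] .
  have wcp: "\<And>rs a. \<lbrakk>length rs = n - 1; zM \<notin> g rs a; g rs a \<subseteq> Q\<rbrakk> \<Longrightarrow>
      \<exists>i < n - 1. g (rs ! i # replicate (n - 2) one) a \<subseteq> Q"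
    and Q: "subhypermodule m n f g Q"
    using W by (simp_all add: weakly_classical_prime_def)
  have "length (s # tl rs) = n - 1"
    using rs n2 by simp
  then have "\<exists>i < n - 1. g ((s # tl rs) ! i # replicate (n - 2) one) a \<subseteq> Q"
    using nonzero inQ by (intro wcp) (simp_all add: absorbed)
  then obtain i where i: "i < n - 1"
    and gi: "g ((s # tl rs) ! i # replicate (n - 2) one) a \<subseteq> Q"
    by blast
  show ?thesis
  proof (cases i)
    case 0
    have "g (s # replicate (n - 2) one) a =
        gset g ps (g (hd rs # replicate (n - 2) one) a)"
      using hypermodule_scalar_assoc[OF H n2 ps, of "hd rs # replicate (n - 2) one"] n2
      by (simp add: s_def)
    moreover have "rs ! 0 = hd rs"
      using rs n2 by (cases rs) auto
    ultimately show ?thesis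
      using gi 0 i by (intro that[of 0]) simp_all
  next
    case Suc
    then have "g (rs ! i # replicate (n - 2) one) a \<subseteq> Q"
      using gi rs n2 by (cases rs) auto
    with i show ?thesis
      by (intro that[of i] subhypermodule_closed[OF Q ps])
  qed
qed

theorem mainTheorem9:
  fixes m n :: nat
    and addR :: "'r list \<Rightarrow> 'r set" and mulR :: "'r list \<Rightarrow> 'r"
    and zR one :: 'r
    and f :: "'m list \<Rightarrow> 'm set" and g :: "'r list \<Rightarrow> 'm \<Rightarrow> 'm set" and zM :: 'm
    and Q :: "'m set"
  assumes "krasner_hyperring m n addR mulR zR one"
    and "hypermodule m n addR mulR zR one f g zM"
    and "weakly_classical_prime m n one f g zM Q"
    and "length rs = n - 1"
  shows "QX n one g Q (g rs a) \<subseteq>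
           FX n zR one g zM (g rs a) \<union>
           (\<Union>i<n-1. QX n one g Q (g (rs ! i # replicate (n-2) one) a))"
proof
  fix r assume r: "r \<in> QX n one g Q (g rs a)"
  have n2: "2 \<le> n"
    using assms(1) by (rule krasner_hyperring_arity)
  have Q: "subhypermodule m n f g Q"
    using assms(3) by (simp add: weakly_classical_prime_def)
  consider "r = zR" | "r \<in> FX n zR one g zM (g rs a)"
    | "zM \<notin> gset g (r # replicate (n - 2) one) (g rs a)"
    by (auto simp: FX_def)
  then show "r \<in> FX n zR one g zM (g rs a) \<union>
      (\<Union>i<n-1. QX n one g Q (g (rs ! i # replicate (n-2) one) a))"
  proof cases
    case 1
    moreover have "0 < n - 1"
      using n2 by simp
    ultimately show ?thesis
      using zero_mem_QX[OF assms(2) n2 Q] by blast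
  next
    case 3
    have len: "length (r # replicate (n - 2) one) = n - 1"
      using n2 by simp
    have "gset g (r # replicate (n - 2) one) (g rs a) \<subseteq> Q"
      using r by (simp add: QX_def)
    then obtain i where "i < n - 1"
      and "gset g (r # replicate (n - 2) one) (g (rs ! i # replicate (n - 2) one) a) \<subseteq> Q"
      by (rule weakly_classical_prime_scaled[OF assms(2) n2 assms(3) len assms(4) 3])
    then show ?thesis
      unfolding QX_def by blast
  qed simp
qed

end
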